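(* Let $\mathbf{k}$ be a field and let $\mathfrak{B}=\mathbf{k}\langle g,x\rangle$ be the free algebra on $g,x$, made into a bialgebra by $\Delta(g)=g\otimes g$, $\Delta(x)=x\otimes 1+g\otimes x$, $\varepsilon(g)=1$, $\varepsilon(x)=0$. For integers $k,l\ge 0$ let $C_{k,l}$ be the sum of all monomials in $g,x$ containing exactly $k$ letters $g$ and $l$ letters $x$ (so $C_{0,0}=1$), and set $C_{k,l}=0$ if $k<0$ or $l<0$. Then: (1) $C_{k,l}=g\,C_{k-1,l}+x\,C_{k,l-1}=C_{k-1,l}\,g+C_{k,l-1}\,x$; (2) $\Delta(x^n)=\sum_{k\ge0}C_{k,n-k}\otimes x^k$ for all $n\ge0$; (3) $\Delta(C_{p,q})=\sum_{k\ge0}C_{p+k,q-k}\otimes C_{p,k}$. *)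

theory Defs
  imports Main "HOL-Library.Poly_Mapping" "HOL-Library.Product_Plus"
begin

text \<open>Words form a (non-commutative) monoid under concatenation, written additively so
  that the monoid ring construction of Poly_Mapping applies.\<close>

datatype letter = Lg | Lx

datatype word = Word "letter list"

instantiation word :: monoid_add
begin
definition zero_word :: word where "zero_word = Word []"
fun plus_word :: "word \<Rightarrow> word \<Rightarrow> word" where
  "plus_word (Word u) (Word v) = Word (u @ v)"
instance
proof
  fix a b c :: word
  show "a + b + c = a + (b + c)" by (cases a; cases b; cases c) simp
  show "0 + a = a" by (cases a) (simp add: zero_word_def)
  show "a + 0 = a" by (cases a) (simp add: zero_word_def)
qed
end

text \<open>The free algebra k<g,x>: finitely supported k-linear combinations of words,
  with multiplication the convolution (monoid algebra of the free monoid).\<close>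
type_synonym 'k fa = "word \<Rightarrow>\<^sub>0 'k"

text \<open>B \<otimes> B: the tensor product of two copies of the free algebra, with basis the
  pairs of words (u,v) standing for u \<otimes> v, and componentwise multiplication.\<close>
type_synonym 'k fa2 = "(word \<times> word) \<Rightarrow>\<^sub>0 'k"

definition gen_g :: "'k::semiring_1 fa" where "gen_g = Poly_Mapping.single (Word [Lg]) 1"
definition gen_x :: "'k::semiring_1 fa" where "gen_x = Poly_Mapping.single (Word [Lx]) 1"

definition tensor :: "'k::semiring_1 fa \<Rightarrow> 'k fa \<Rightarrow> 'k fa2" where
  "tensor a b = (\<Sum>u\<in>Poly_Mapping.keys a. \<Sum>v\<in>Poly_Mapping.keys b.
      Poly_Mapping.single (u, v) (Poly_Mapping.lookup a u * Poly_Mapping.lookup b v))"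

fun Delta_letter :: "letter \<Rightarrow> 'k::semiring_1 fa2" where
  "Delta_letter Lg = tensor gen_g gen_g"
| "Delta_letter Lx = tensor gen_x 1 + tensor gen_g gen_x"

fun Delta_word :: "word \<Rightarrow> 'k::semiring_1 fa2" where
  "Delta_word (Word w) = prod_list (map Delta_letter w)"

definition Delta :: "'k::semiring_1 fa \<Rightarrow> 'k fa2" where
  "Delta a = (\<Sum>w\<in>Poly_Mapping.keys a. Poly_Mapping.single (0, 0) (Poly_Mapping.lookup a w) * Delta_word w)"

definition count_g :: "letter list \<Rightarrow> nat" where
  "count_g w = length (filter (\<lambda>c. c = Lg) w)"

definition C :: "int \<Rightarrow> int \<Rightarrow> 'k::semiring_1 fa" where
  "C k l = (if k < 0 \<or> l < 0 then 0 else
      (\<Sum>w\<in>{w. length w = nat (k + l) \<and> count_g w = nat k}.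
         Poly_Mapping.single (Word w) 1))"

end

theory Submission
  imports Defs
begin

text \<open>The recursions for \<open>C k l\<close> come from sorting the words by their first,
  respectively last, letter. Since \<open>x\<^sup>n = C 0 n\<close>, part (2) is the case \<open>p = 0\<close> of (3).
  Part (3) goes by induction on \<open>p + q\<close>: \<open>\<Delta>\<close> is multiplicative, so
  \<open>\<Delta>(C p q) = \<Delta>(C (p-1) q) (g\<otimes>g) + \<Delta>(C p (q-1)) (x\<otimes>1 + g\<otimes>x)\<close>, and the claimed sums obey
  the same recursion: after shifting the summation index in the \<open>g\<otimes>x\<close> part, the right
  tensor factors recombine as \<open>C (p-1) k g + C p (k-1) x = C p k\<close> and then the left ones
  as \<open>C (p+k-1) (q-k) g + C (p+k) (q-k-1) x = C (p+k) (q-k)\<close>.\<close>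

lemma poly_mapping_eq_sum_single:
  fixes p :: "'a \<Rightarrow>\<^sub>0 'b::comm_monoid_add"
  assumes "finite S" "Poly_Mapping.keys p \<subseteq> S"
  shows "p = (\<Sum>k\<in>S. Poly_Mapping.single k (Poly_Mapping.lookup p k))"
proof (rule poly_mapping_eqI)
  fix k'
  have "(\<Sum>k\<in>S. Poly_Mapping.lookup (Poly_Mapping.single k (Poly_Mapping.lookup p k)) k')
      = (\<Sum>k\<in>S. if k = k' then Poly_Mapping.lookup p k else 0)"
    by (rule sum.cong) (auto simp: lookup_single)
  also have "\<dots> = Poly_Mapping.lookup p k'"
    using assms by (auto simp: sum.delta in_keys_iff)
  finally show "Poly_Mapping.lookup p k' = Poly_Mapping.lookup (\<Sum>k\<in>S. Poly_Mapping.single k (Poly_Mapping.lookup p k)) k'"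
    by (simp add: lookup_sum)
qed

lemma times_poly_mapping_eq_sum:
  fixes a b :: "'a::monoid_add \<Rightarrow>\<^sub>0 'b::semiring_0"
  shows "a * b = (\<Sum>u\<in>Poly_Mapping.keys a. \<Sum>v\<in>Poly_Mapping.keys b.
     Poly_Mapping.single (u + v) (Poly_Mapping.lookup a u * Poly_Mapping.lookup b v))"
proof -
  have "a * b = (\<Sum>u\<in>Poly_Mapping.keys a. Poly_Mapping.single u (Poly_Mapping.lookup a u))
      * (\<Sum>v\<in>Poly_Mapping.keys b. Poly_Mapping.single v (Poly_Mapping.lookup b v))"
    by (subst (1 2) poly_mapping_eq_sum_single) auto
  then show ?thesis by (simp add: sum_product mult_single)
qed

lemma single_zero_commute:
  fixes p :: "'a::monoid_add \<Rightarrow>\<^sub>0 'b::comm_semiring_0"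
  shows "Poly_Mapping.single 0 c * p = p * Poly_Mapping.single 0 c"
  by (subst (1 2) poly_mapping_eq_sum_single[of "Poly_Mapping.keys p" p])
     (auto simp: sum_distrib_left sum_distrib_right mult_single mult.commute)

lemma tensor_eq_sum_over:
  fixes a b :: "'k::comm_semiring_1 fa"
  assumes "finite S" "Poly_Mapping.keys a \<subseteq> S" "finite T" "Poly_Mapping.keys b \<subseteq> T"
  shows "tensor a b = (\<Sum>u\<in>S. \<Sum>v\<in>T.
      Poly_Mapping.single (u, v) (Poly_Mapping.lookup a u * Poly_Mapping.lookup b v))"
proof -
  have "tensor a b = (\<Sum>u\<in>S. \<Sum>v\<in>Poly_Mapping.keys b.
      Poly_Mapping.single (u, v) (Poly_Mapping.lookup a u * Poly_Mapping.lookup b v))"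
    unfolding tensor_def using assms by (intro sum.mono_neutral_left) (auto simp: in_keys_iff)
  also have "\<dots> = (\<Sum>u\<in>S. \<Sum>v\<in>T.
      Poly_Mapping.single (u, v) (Poly_Mapping.lookup a u * Poly_Mapping.lookup b v))"
    using assms by (intro sum.cong refl sum.mono_neutral_left) (auto simp: in_keys_iff)
  finally show ?thesis .
qed

lemma tensor_single:
  "tensor (Poly_Mapping.single u c :: 'k::comm_semiring_1 fa) (Poly_Mapping.single v d)
   = Poly_Mapping.single (u, v) (c * d)"
  by (subst tensor_eq_sum_over[where S = "{u}" and T = "{v}"]) auto

lemma tensor_add_left: "tensor (a + b :: 'k::comm_semiring_1 fa) c = tensor a c + tensor b c"
  by (subst (1 2 3) tensor_eq_sum_over[where S = "Poly_Mapping.keys a \<union> Poly_Mapping.keys b \<union> Poly_Mapping.keys (a + b)"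
        and T = "Poly_Mapping.keys c"])
     (auto simp: lookup_add distrib_right single_add sum.distrib)

lemma tensor_add_right: "tensor (a :: 'k::comm_semiring_1 fa) (b + c) = tensor a b + tensor a c"
  by (subst (1 2 3) tensor_eq_sum_over[where S = "Poly_Mapping.keys a"
        and T = "Poly_Mapping.keys b \<union> Poly_Mapping.keys c \<union> Poly_Mapping.keys (b + c)"])
     (auto simp: lookup_add distrib_left single_add sum.distrib)

lemma tensor_zero_left [simp]: "tensor (0 :: 'k::comm_semiring_1 fa) b = 0"
  by (simp add: tensor_def)

lemma tensor_zero_right [simp]: "tensor (a :: 'k::comm_semiring_1 fa) 0 = 0"
  by (simp add: tensor_def)

lemma tensor_sum_left:
  "finite I \<Longrightarrow> tensor (\<Sum>i\<in>I. f i :: 'k::comm_semiring_1 fa) b = (\<Sum>i\<in>I. tensor (f i) b)"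
  by (induction I rule: finite_induct) (auto simp: tensor_add_left)

lemma tensor_sum_right:
  "finite I \<Longrightarrow> tensor (a :: 'k::comm_semiring_1 fa) (\<Sum>i\<in>I. f i) = (\<Sum>i\<in>I. tensor a (f i))"
  by (induction I rule: finite_induct) (auto simp: tensor_add_right)

lemma tensor_one: "tensor (1 :: 'k::comm_semiring_1 fa) 1 = 1"
  by (metis single_one tensor_single mult_1 zero_prod_def)

lemma tensor_mult: "tensor (a :: 'k::comm_semiring_1 fa) b * tensor c d = tensor (a * c) (b * d)"
proof -
  let ?K = "Poly_Mapping.keys" and ?l = "Poly_Mapping.lookup"
  have "tensor a b * tensor c d = (\<Sum>u\<in>?K a. \<Sum>u'\<in>?K c. \<Sum>v\<in>?K b. \<Sum>v'\<in>?K d.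
      Poly_Mapping.single (u + u', v + v') (?l a u * ?l c u' * (?l b v * ?l d v')))"
    unfolding tensor_def sum_product mult_single by (simp add: mult_ac)
  also have "\<dots> = (\<Sum>v\<in>?K b. \<Sum>v'\<in>?K d. \<Sum>u\<in>?K a. \<Sum>u'\<in>?K c.
      Poly_Mapping.single (u + u', v + v') (?l a u * ?l c u' * (?l b v * ?l d v')))"
    by (simp only: sum.swap[of _ "?K c" "?K b"] sum.swap[of _ "?K a" "?K b"]
        sum.swap[of _ "?K c" "?K d"] sum.swap[of _ "?K a" "?K d"])
  also have "\<dots> = tensor (a * c) (b * d)"
    by (simp add: times_poly_mapping_eq_sum[of a c] times_poly_mapping_eq_sum[of b d]
        tensor_sum_left tensor_sum_right tensor_single)
  finally show ?thesis .
qed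

lemma Delta_eq_sum_over:
  fixes a :: "'k::comm_semiring_1 fa"
  assumes "finite S" "Poly_Mapping.keys a \<subseteq> S"
  shows "Delta a = (\<Sum>w\<in>S. Poly_Mapping.single (0, 0) (Poly_Mapping.lookup a w) * Delta_word w)"
  unfolding Delta_def using assms
  by (intro sum.mono_neutral_left) (auto simp: in_keys_iff)

lemma Delta_single:
  "Delta (Poly_Mapping.single w c :: 'k::comm_semiring_1 fa) = Poly_Mapping.single (0, 0) c * Delta_word w"
  by (subst Delta_eq_sum_over[where S = "{w}"]) auto

lemma Delta_add: "Delta (a + b :: 'k::comm_semiring_1 fa) = Delta a + Delta b"
  by (subst (1 2 3) Delta_eq_sum_over[where S = "Poly_Mapping.keys a \<union> Poly_Mapping.keys b \<union> Poly_Mapping.keys (a + b)"])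
     (auto simp: lookup_add distrib_right single_add sum.distrib)

lemma Delta_zero [simp]: "Delta (0 :: 'k::comm_semiring_1 fa) = 0"
  by (simp add: Delta_def)

lemma Delta_sum: "finite I \<Longrightarrow> Delta (\<Sum>i\<in>I. f i :: 'k::comm_semiring_1 fa) = (\<Sum>i\<in>I. Delta (f i))"
  by (induction I rule: finite_induct) (auto simp: Delta_add)

lemma Delta_word_plus: "(Delta_word (u + v) :: 'k::comm_semiring_1 fa2) = Delta_word u * Delta_word v"
  by (cases u; cases v) simp

lemma Delta_mult: "Delta (a * b :: 'k::comm_semiring_1 fa) = Delta a * Delta b"
proof -
  let ?K = "Poly_Mapping.keys" and ?l = "Poly_Mapping.lookup"
  let ?s = "\<lambda>c. Poly_Mapping.single (0::word, 0::word) c :: 'k fa2"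
  have "Delta (a * b) = (\<Sum>u\<in>?K a. \<Sum>v\<in>?K b. ?s (?l a u) * ?s (?l b v) * (Delta_word u * Delta_word v))"
    by (simp add: times_poly_mapping_eq_sum[of a b] Delta_sum Delta_single Delta_word_plus mult_single)
  also have "\<dots> = (\<Sum>u\<in>?K a. \<Sum>v\<in>?K b. (?s (?l a u) * Delta_word u) * (?s (?l b v) * Delta_word v))"
    by (intro sum.cong refl) (metis (no_types, lifting) mult.assoc single_zero_commute zero_prod_def)
  also have "\<dots> = Delta a * Delta b"
    unfolding Delta_def by (simp add: sum_product)
  finally show ?thesis .
qed

lemma single_zero_one_fa2: "(Poly_Mapping.single (0, 0) 1 :: 'k::comm_semiring_1 fa2) = 1"
  by (metis single_one zero_prod_def)

lemma Delta_one: "Delta (1 :: 'k::comm_semiring_1 fa) = 1"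
proof -
  have "Delta_word 0 = (1 :: 'k fa2)" by (simp add: zero_word_def)
  then show ?thesis using Delta_single[of 0 "1::'k"] by (simp add: single_zero_one_fa2)
qed

lemma Delta_gen_g: "Delta (gen_g :: 'k::comm_semiring_1 fa) = tensor gen_g gen_g"
  by (simp add: gen_g_def Delta_single single_zero_one_fa2)

lemma Delta_gen_x: "Delta (gen_x :: 'k::comm_semiring_1 fa) = tensor gen_x 1 + tensor gen_g gen_x"
  by (simp add: gen_x_def Delta_single single_zero_one_fa2)

abbreviation monomial :: "letter list \<Rightarrow> 'k::comm_semiring_1 fa" where
  "monomial w \<equiv> Poly_Mapping.single (Word w) 1"

lemma letter_cases: "c = Lg \<or> c = Lx"
  by (cases c) auto

lemma sum_monomials_split_first:
  assumes "finite A" "[] \<notin> A"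
  shows "(\<Sum>w\<in>A. monomial w :: 'k::comm_semiring_1 fa) =
    gen_g * (\<Sum>w\<in>{w. Lg # w \<in> A}. monomial w) + gen_x * (\<Sum>w\<in>{w. Lx # w \<in> A}. monomial w)"
proof -
  have A: "A = Cons Lg ` {w. Lg # w \<in> A} \<union> Cons Lx ` {w. Lx # w \<in> A}"
  proof (rule set_eqI, rule iffI)
    fix w assume "w \<in> A"
    with assms obtain c v where "w = c # v" by (cases w) auto
    with \<open>w \<in> A\<close> show "w \<in> Cons Lg ` {w. Lg # w \<in> A} \<union> Cons Lx ` {w. Lx # w \<in> A}"
      using letter_cases[of c] by auto
  qed auto
  have "finite {w. c # w \<in> A}" for c
    using assms(1) by (rule finite_vimageI[where h = "Cons c", unfolded vimage_def]) auto
  then have "(\<Sum>w\<in>A. monomial w :: 'k fa) =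
      (\<Sum>w\<in>Cons Lg ` {w. Lg # w \<in> A}. monomial w) + (\<Sum>w\<in>Cons Lx ` {w. Lx # w \<in> A}. monomial w)"
    by (subst A, intro sum.union_disjoint) auto
  then show ?thesis
    by (simp add: sum.reindex sum_distrib_left gen_g_def gen_x_def mult_single)
qed

lemma sum_monomials_split_last:
  assumes "finite A" "[] \<notin> A"
  shows "(\<Sum>w\<in>A. monomial w :: 'k::comm_semiring_1 fa) =
    (\<Sum>w\<in>{w. w @ [Lg] \<in> A}. monomial w) * gen_g + (\<Sum>w\<in>{w. w @ [Lx] \<in> A}. monomial w) * gen_x"
proof -
  have A: "A = (\<lambda>w. w @ [Lg]) ` {w. w @ [Lg] \<in> A} \<union> (\<lambda>w. w @ [Lx]) ` {w. w @ [Lx] \<in> A}"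
  proof (rule set_eqI, rule iffI)
    fix w assume "w \<in> A"
    with assms obtain c v where "w = v @ [c]" by (cases w rule: rev_cases) auto
    with \<open>w \<in> A\<close> show "w \<in> (\<lambda>w. w @ [Lg]) ` {w. w @ [Lg] \<in> A} \<union> (\<lambda>w. w @ [Lx]) ` {w. w @ [Lx] \<in> A}"
      using letter_cases[of c] by auto
  qed auto
  have "finite {w. w @ [c] \<in> A}" for c
    using assms(1) by (rule finite_vimageI[where h = "\<lambda>w. w @ [c]", unfolded vimage_def]) (auto simp: inj_on_def)
  then have "(\<Sum>w\<in>A. monomial w :: 'k fa) =
      (\<Sum>w\<in>(\<lambda>w. w @ [Lg]) ` {w. w @ [Lg] \<in> A}. monomial w) + (\<Sum>w\<in>(\<lambda>w. w @ [Lx]) ` {w. w @ [Lx] \<in> A}. monomial w)"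
    by (subst A, intro sum.union_disjoint) auto
  then show ?thesis
    by (simp add: sum.reindex inj_on_def sum_distrib_right gen_g_def gen_x_def mult_single)
qed

definition words :: "nat \<Rightarrow> nat \<Rightarrow> letter list set" where
  "words n k = {w. length w = n \<and> count_g w = k}"

lemma finite_words: "finite (words n k)"
proof (rule finite_subset)
  show "words n k \<subseteq> {w. set w \<subseteq> {Lg, Lx} \<and> length w = n}"
    using letter_cases by (auto simp: words_def)
qed (simp add: finite_lists_length_eq)

lemma C_eq_sum_words: "k \<ge> 0 \<Longrightarrow> l \<ge> 0 \<Longrightarrow> C k l = (\<Sum>w\<in>words (nat (k + l)) (nat k). monomial w)"
  by (simp add: C_def words_def)

lemma C_negative: "k < 0 \<or> l < 0 \<Longrightarrow> C k l = 0"
  by (simp add: C_def)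

lemma C_0_0: "(C 0 0 :: 'k::comm_semiring_1 fa) = 1"
proof -
  have "words 0 0 = {[]}" by (auto simp: words_def count_g_def)
  then show ?thesis by (simp add: C_eq_sum_words zero_word_def[symmetric])
qed

lemma C_rec_first:
  assumes "(k, l) \<noteq> (0, 0)"
  shows "(C k l :: 'k::comm_semiring_1 fa) = gen_g * C (k - 1) l + gen_x * C k (l - 1)"
proof (cases "k < 0 \<or> l < 0")
  case True then show ?thesis by (auto simp: C_negative)
next
  case False
  then have kl: "k \<ge> 0" "l \<ge> 0" by auto
  have ne: "[] \<notin> words (nat (k + l)) (nat k)" using assms kl by (auto simp: words_def count_g_def)
  have g: "{w. Lg # w \<in> words (nat (k + l)) (nat k)} = (if k = 0 then {} else words (nat (k - 1 + l)) (nat (k - 1)))"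
    using kl by (auto simp: words_def count_g_def)
  have x: "{w. Lx # w \<in> words (nat (k + l)) (nat k)} = (if l = 0 then {} else words (nat (k + (l - 1))) (nat k))"
    using kl by (auto simp: words_def count_g_def) (metis Suc_n_not_le_n length_filter_le)
  show ?thesis
    using kl by (simp add: C_eq_sum_words sum_monomials_split_first[OF finite_words ne] g x C_negative)
qed

lemma C_rec_last:
  assumes "(k, l) \<noteq> (0, 0)"
  shows "(C k l :: 'k::comm_semiring_1 fa) = C (k - 1) l * gen_g + C k (l - 1) * gen_x"
proof (cases "k < 0 \<or> l < 0")
  case True then show ?thesis by (auto simp: C_negative)
next
  case False
  then have kl: "k \<ge> 0" "l \<ge> 0" by auto
  have ne: "[] \<notin> words (nat (k + l)) (nat k)" using assms kl by (auto simp: words_def count_g_def)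
  have g: "{w. w @ [Lg] \<in> words (nat (k + l)) (nat k)} = (if k = 0 then {} else words (nat (k - 1 + l)) (nat (k - 1)))"
    using kl by (auto simp: words_def count_g_def)
  have x: "{w. w @ [Lx] \<in> words (nat (k + l)) (nat k)} = (if l = 0 then {} else words (nat (k + (l - 1))) (nat k))"
    using kl by (auto simp: words_def count_g_def) (metis Suc_n_not_le_n length_filter_le)
  show ?thesis
    using kl by (simp add: C_eq_sum_words sum_monomials_split_last[OF finite_words ne] g x C_negative)
qed

lemma gen_x_power_eq_C: "(gen_x :: 'k::comm_semiring_1 fa) ^ n = C 0 (int n)"
proof (induction n)
  case 0
  then show ?case by (simp add: C_0_0)
next
  case (Suc n)
  have "(C 0 (int (Suc n)) :: 'k fa) = C 0 (int n) * gen_x"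
    using C_rec_last[of 0 "int (Suc n)"] by (simp add: C_negative)
  then show ?case by (simp only: power_Suc2 Suc.IH)
qed

lemma sum_atLeastAtMost_int_shift:
  fixes h :: "int \<Rightarrow> 'a::comm_monoid_add"
  assumes "0 \<le> N" "h (-1) = 0" "h N = 0"
  shows "(\<Sum>k\<in>{0..N}. h (k - 1)) = (\<Sum>k\<in>{0..N}. h k)"
proof -
  have "(\<Sum>k\<in>{0..N}. h (k - 1)) = (\<Sum>k\<in>(\<lambda>k. k - 1) ` {0..N}. h k)"
    by (subst sum.reindex) (auto simp: inj_on_def)
  also have "(\<lambda>k. k - 1) ` {0..N} = insert (-1) {0..N - 1}"
    using assms(1) by auto
  also have "(\<Sum>k\<in>insert (-1) {0..N - 1}. h k) = (\<Sum>k\<in>insert N {0..N - 1}. h k)"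
    using assms by simp
  also have "insert N {0..N - 1} = {0..N}"
    using assms(1) by auto
  finally show ?thesis .
qed

text \<open>The bound \<open>N\<close> is arbitrary as long as \<open>N \<ge> q\<close> (the terms with \<open>k > q\<close> vanish); the
  induction below lowers \<open>q\<close> while keeping \<open>N\<close> fixed.\<close>

definition C_tensor_sum :: "int \<Rightarrow> int \<Rightarrow> int \<Rightarrow> 'k::comm_semiring_1 fa2" where
  "C_tensor_sum N p q = (\<Sum>k\<in>{0..N}. tensor (C (p + k) (q - k)) (C p k))"

text \<open>Where \<open>C_rec_last\<close> fails, at \<open>(p, k) = (0, 0)\<close>, the left factor is \<open>C (-1) q = 0\<close>.\<close>

lemma tensor_C_rec_last_right:
  "tensor (C (p + k - 1) q * b) (C p k :: 'k::comm_semiring_1 fa) =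
     tensor (C (p + k - 1) q * b) (C (p - 1) k * gen_g + C p (k - 1) * gen_x)"
proof (cases "(p, k) = (0, 0)")
  case True
  then show ?thesis by (simp add: C_negative)
next
  case False
  then show ?thesis by (simp flip: C_rec_last)
qed

lemma C_tensor_sum_rec:
  assumes "0 \<le> p" "0 \<le> q" "(p, q) \<noteq> (0, 0)" "q \<le> N"
  shows "(C_tensor_sum N p q :: 'k::comm_semiring_1 fa2) =
    C_tensor_sum N (p - 1) q * tensor gen_g gen_g + C_tensor_sum N p (q - 1) * (tensor gen_x 1 + tensor gen_g gen_x)"
proof -
  let ?G = "gen_g :: 'k fa" and ?X = "gen_x :: 'k fa"
  have "C_tensor_sum N (p - 1) q * tensor ?G ?G + C_tensor_sum N p (q - 1) * (tensor ?X 1 + tensor ?G ?X)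
      = (\<Sum>k\<in>{0..N}. tensor (C (p + k - 1) (q - k) * ?G) (C (p - 1) k * ?G))
      + (\<Sum>k\<in>{0..N}. tensor (C (p + k) (q - k - 1) * ?X) (C p k))
      + (\<Sum>k\<in>{0..N}. tensor (C (p + k) (q - k - 1) * ?G) (C p k * ?X))"
    unfolding C_tensor_sum_def
    by (simp add: sum_distrib_right distrib_left tensor_mult sum.distrib algebra_simps)
  also have "(\<Sum>k\<in>{0..N}. tensor (C (p + k) (q - k - 1) * ?G) (C p k * ?X))
      = (\<Sum>k\<in>{0..N}. tensor (C (p + k - 1) (q - k) * ?G) (C p (k - 1) * ?X))"
  proof -
    let ?h = "\<lambda>k. tensor (C (p + k) (q - k - 1) * ?G) (C p k * ?X)"
    have "(\<Sum>k\<in>{0..N}. ?h k) = (\<Sum>k\<in>{0..N}. ?h (k - 1))"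
      using assms by (intro sum_atLeastAtMost_int_shift[symmetric]) (auto simp: C_negative)
    then show ?thesis by (simp add: algebra_simps)
  qed
  also have "(\<Sum>k\<in>{0..N}. tensor (C (p + k - 1) (q - k) * ?G) (C (p - 1) k * ?G))
      + (\<Sum>k\<in>{0..N}. tensor (C (p + k) (q - k - 1) * ?X) (C p k))
      + (\<Sum>k\<in>{0..N}. tensor (C (p + k - 1) (q - k) * ?G) (C p (k - 1) * ?X))
      = (\<Sum>k\<in>{0..N}. tensor (C (p + k - 1) (q - k) * ?G + C (p + k) (q - k - 1) * ?X) (C p k))"
  proof -
    have "(\<Sum>k\<in>{0..N}. tensor (C (p + k - 1) (q - k) * ?G) (C p k))
        = (\<Sum>k\<in>{0..N}. tensor (C (p + k - 1) (q - k) * ?G) (C (p - 1) k * ?G))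
        + (\<Sum>k\<in>{0..N}. tensor (C (p + k - 1) (q - k) * ?G) (C p (k - 1) * ?X))"
      unfolding sum.distrib[symmetric]
      by (intro sum.cong refl) (subst tensor_C_rec_last_right, simp add: tensor_add_right)
    then show ?thesis by (simp add: tensor_add_left sum.distrib algebra_simps)
  qed
  also have "\<dots> = C_tensor_sum N p q"
  proof -
    have "C (p + k) (q - k) = C (p + k - 1) (q - k) * ?G + C (p + k) (q - k - 1) * ?X"
      if "k \<in> {0..N}" for k
      using that assms by (intro C_rec_last) auto
    then show ?thesis by (simp add: C_tensor_sum_def)
  qed
  finally show ?thesis by simp
qed

lemma Delta_C_eq_C_tensor_sum:
  assumes "q \<le> N"
  shows "Delta (C p q :: 'k::comm_semiring_1 fa) = C_tensor_sum N p q"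
  using assms
proof (induction "nat (p + q)" arbitrary: p q rule: less_induct)
  case less
  consider "p < 0 \<or> q < 0" | "p = 0" "q = 0" | "0 \<le> p" "0 \<le> q" "(p, q) \<noteq> (0, 0)"
    by fastforce
  then show ?case
  proof cases
    case 1
    then show ?thesis by (auto simp: C_tensor_sum_def C_negative intro!: sum.neutral)
  next
    case 2
    then have "C_tensor_sum N p q = (\<Sum>k\<in>{0}. tensor (C (p + k) (q - k)) (C p k) :: 'k fa2)"
      unfolding C_tensor_sum_def using less.prems
      by (intro sum.mono_neutral_right) (auto simp: C_negative)
    with 2 show ?thesis by (simp add: C_0_0 Delta_one tensor_one)
  next
    case 3
    have IH: "Delta (C (p - 1) q :: 'k fa) = C_tensor_sum N (p - 1) q"
      "Delta (C p (q - 1) :: 'k fa) = C_tensor_sum N p (q - 1)"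
      using 3 less.prems by (auto intro!: less.hyps)
    have "Delta (C p q :: 'k fa) = Delta (C (p - 1) q) * Delta gen_g + Delta (C p (q - 1)) * Delta gen_x"
      using 3 by (simp add: C_rec_last[of p q] Delta_add Delta_mult)
    also have "\<dots> = C_tensor_sum N p q"
      using 3 less.prems by (simp add: IH C_tensor_sum_rec Delta_gen_g Delta_gen_x)
    finally show ?thesis .
  qed
qed

lemma sum_atLeastAtMost_nat_int:
  "(\<Sum>k\<in>{0..n}. f (int k)) = (\<Sum>k\<in>{0..int n}. (f k :: 'a::comm_monoid_add))"
proof -
  have "(\<Sum>k\<in>{0..int n}. f k) = (\<Sum>k\<in>int ` {0..n}. f k)" by (simp add: image_int_atLeastAtMost)
  also have "\<dots> = (\<Sum>k\<in>{0..n}. f (int k))" by (subst sum.reindex) auto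
  finally show ?thesis by simp
qed

lemma Delta_C:
  "Delta (C (int p) (int q) :: 'k::comm_semiring_1 fa) =
     (\<Sum>k\<in>{0..q}. tensor (C (int p + int k) (int q - int k)) (C (int p) (int k)))"
  using Delta_C_eq_C_tensor_sum[of "int q" "int q" "int p"]
  by (simp add: C_tensor_sum_def sum_atLeastAtMost_nat_int[where f = "\<lambda>k. tensor (C (int p + k) (int q - k)) (C (int p) k)"])

theorem lemma2p10:
  shows "(\<forall>k l. k \<ge> 0 \<and> l \<ge> 0 \<and> (k, l) \<noteq> (0, 0) \<longrightarrow>
            (C k l :: 'k::field fa) = gen_g * C (k - 1) l + gen_x * C k (l - 1) \<and>
            (C k l :: 'k fa) = C (k - 1) l * gen_g + C k (l - 1) * gen_x)
      \<and> (\<forall>n::nat. Delta ((gen_x :: 'k fa) ^ n) =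
            (\<Sum>k\<in>{0..n}. tensor (C (int k) (int n - int k)) (gen_x ^ k)))
      \<and> (\<forall>p q :: nat. Delta (C (int p) (int q) :: 'k fa) =
            (\<Sum>k\<in>{0..q}. tensor (C (int p + int k) (int q - int k)) (C (int p) (int k))))"
proof (intro conjI allI impI)
  fix k l :: int
  assume "0 \<le> k \<and> 0 \<le> l \<and> (k, l) \<noteq> (0, 0)"
  then show "(C k l :: 'k fa) = gen_g * C (k - 1) l + gen_x * C k (l - 1)"
    and "(C k l :: 'k fa) = C (k - 1) l * gen_g + C k (l - 1) * gen_x"
    using C_rec_first[of k l] C_rec_last[of k l] by auto
next
  fix n :: nat
  show "Delta ((gen_x :: 'k fa) ^ n) = (\<Sum>k\<in>{0..n}. tensor (C (int k) (int n - int k)) (gen_x ^ k))"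
    using Delta_C[of 0 n] by (simp add: gen_x_power_eq_C)
qed (rule Delta_C)

end
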